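(* Let $K$ be a field of characteristic $p>0$, $k=\bigcap_{n\ge0}K^{p^n}$, with $K/k$ finitely generated. Let $n\ge1$ and let $W_\bullet$ be an $n$-foliation on $K$ of rank $r$. Then there exists an $\infty$-foliation $W'_\bullet$ on $K$ of rank $r$ with $W'_i=W_i$ for all $0\le i\le n$.
   Context: $K^{p^n}=\{x^{p^n}:x\in K\}$; $A\cdot B$ is the composite. A power tower on $K$ is a sequence of subfields $W_0,W_1,\ldots$ with $W_j=W_i\cdot K^{p^j}$ for all $0\le j\le i$. It has length $n$ if $n$ is the least integer with $W_N=W_n$ for all $N\ge n$. An $n$-foliation (for an integer $n\ge1$) of rank $r$ is a power tower of length $n$ with $[W_i:W_{i+1}]=p^r$ for all $0\le i<n$. An $\infty$-foliation of rank $r\ge1$ is a power tower with $[W_i:W_{i+1}]=p^r$ for all $i\ge0$. *)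

theory Defs
  imports "HOL-Algebra.Algebra"
begin

definition frob_image :: "('a, 'b) ring_scheme \<Rightarrow> nat \<Rightarrow> nat \<Rightarrow> 'a set" where
  "frob_image R p n = (\<lambda>x. x [^]\<^bsub>R\<^esub> (p ^ n)) ` carrier R"

definition composite :: "('a, 'b) ring_scheme \<Rightarrow> 'a set \<Rightarrow> 'a set \<Rightarrow> 'a set" where
  "composite R A B = generate_field R (A \<union> B)"

definition perfect_core :: "('a, 'b) ring_scheme \<Rightarrow> nat \<Rightarrow> 'a set" where
  "perfect_core R p = (\<Inter>n. frob_image R p n)"

definition power_tower :: "('a, 'b) ring_scheme \<Rightarrow> nat \<Rightarrow> (nat \<Rightarrow> 'a set) \<Rightarrow> bool" where
  "power_tower R p W \<longleftrightarrow>
     (\<forall>i. subfield (W i) R) \<and>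
     (\<forall>i j. j \<le> i \<longrightarrow> W j = composite R (W i) (frob_image R p j))"

definition tower_length :: "(nat \<Rightarrow> 'a set) \<Rightarrow> nat \<Rightarrow> bool" where
  "tower_length W n \<longleftrightarrow>
     (\<forall>N\<ge>n. W N = W n) \<and> (\<forall>m<n. \<not> (\<forall>N\<ge>m. W N = W m))"

text \<open>[W_i : W_{i+1}] = d, via the library notion of dimension of W_i over W_{i+1}.\<close>
definition ext_degree :: "('a, 'b) ring_scheme \<Rightarrow> 'a set \<Rightarrow> 'a set \<Rightarrow> nat \<Rightarrow> bool" where
  "ext_degree R E F d \<longleftrightarrow> ring.dimension R d F E"

definition n_foliation :: "('a, 'b) ring_scheme \<Rightarrow> nat \<Rightarrow> nat \<Rightarrow> nat \<Rightarrow> (nat \<Rightarrow> 'a set) \<Rightarrow> bool" where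
  "n_foliation R p n r W \<longleftrightarrow>
     power_tower R p W \<and> tower_length W n \<and>
     (\<forall>i<n. ext_degree R (W i) (W (Suc i)) (p ^ r))"

definition inf_foliation :: "('a, 'b) ring_scheme \<Rightarrow> nat \<Rightarrow> nat \<Rightarrow> (nat \<Rightarrow> 'a set) \<Rightarrow> bool" where
  "inf_foliation R p r W \<longleftrightarrow>
     r \<ge> 1 \<and> power_tower R p W \<and> (\<forall>i. ext_degree R (W i) (W (Suc i)) (p ^ r))"

end

theory Submission
  imports Defs
begin

text \<open>
  A foliation is extended one term at a time. Suppose \<open>L\<close> is to be \<open>W\<^sub>m\<^sub>+\<^sub>1\<close>, so that
  \<open>K\<^bsup>p^(m+1)\<^esup> \<subseteq> L\<close> and \<open>[G : L] = p\<^sup>r\<close> for \<open>G = L K\<^bsup>p^m\<^esup>\<close>. Frobenius maps \<open>G\<close> onto a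
  field \<open>F\<close> with \<open>L\<^sup>p \<subseteq> F \<subseteq> L\<close> and \<open>[F : L\<^sup>p] = p\<^sup>r\<close>. Every element \<open>c\<close> of \<open>L\<close> has
  \<open>c\<^sup>p \<in> L\<^sup>p\<close>, so adjoining it to a field \<open>E \<supseteq> L\<^sup>p\<close> not containing it is an extension of
  degree exactly \<open>p\<close>: the minimal polynomial divides \<open>(X - c)\<^sup>p\<close>, and a proper factor
  \<open>(X - c)\<^sup>d\<close>, \<open>0 < d < p\<close>, would put \<open>c\<^sup>d\<close>, hence \<open>c\<close>, into \<open>E\<close>. Adjoining elements of \<open>L\<close>
  one at a time thus yields \<open>M\<close> with \<open>L\<^sup>p \<subseteq> M \<subseteq> L\<close>, \<open>L = M F\<close> and \<open>[M : L\<^sup>p] = [L : F]\<close>.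
  Comparing degrees over \<open>L\<^sup>p\<close> gives \<open>[L : M] = p\<^sup>r\<close>, and \<open>L = M K\<^bsup>p^(m+1)\<^esup>\<close>, so \<open>M\<close> can
  be \<open>W\<^sub>m\<^sub>+\<^sub>2\<close>. All degrees are finite because \<open>[K : K\<^sup>p]\<close> is, \<open>K\<close> being finitely
  generated over its perfect core; dependent choice iterates the step from \<open>W\<^sub>n\<close> on.
\<close>

section \<open>The freshman's dream\<close>

context cring begin

lemma binomial_expansion:
  assumes x: "x \<in> carrier R" and y: "y \<in> carrier R"
  shows "(x \<oplus> y) [^] n = (\<Oplus>k \<in> {..n}. [(n choose k)] \<cdot> (x [^] k \<otimes> y [^] (n - k)))"
proof (induction n)
  case 0
  show ?case using x y by simp
next
  case (Suc n)
  let ?t = "\<lambda>m (k::nat). x [^] k \<otimes> y [^] (m - k)"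
  have "(x \<oplus> y) [^] Suc n = (x \<oplus> y) [^] n \<otimes> x \<oplus> (x \<oplus> y) [^] n \<otimes> y"
    using x y by (simp add: r_distr)
  also have "(x \<oplus> y) [^] n \<otimes> x = (\<Oplus>k \<in> {..n}. [(n choose k)] \<cdot> ?t (Suc n) (Suc k))"
  proof -
    have "\<And>k j. x [^] k \<otimes> y [^] j \<otimes> x = x [^] Suc k \<otimes> y [^] (j::nat)"
      using x y by (simp add: m_assoc m_comm[of "y [^] _" x] nat_pow_Suc2)
    then show ?thesis
      unfolding Suc using x y by (auto simp: finsum_ldistr add_pow_ldistr intro!: finsum_cong)
  qed
  also have "(x \<oplus> y) [^] n \<otimes> y = (\<Oplus>k \<in> {..Suc n}. [(n choose k)] \<cdot> ?t (Suc n) k)"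
  proof -
    have "(x \<oplus> y) [^] n \<otimes> y = (\<Oplus>k \<in> {..n}. [(n choose k)] \<cdot> ?t (Suc n) k)"
      unfolding Suc using x y
      by (auto simp: finsum_ldistr add_pow_ldistr m_assoc Suc_diff_le intro!: finsum_cong)
    then show ?thesis using x y by (simp add: Pi_def binomial_eq_0)
  qed
  also have "\<dots> = (\<Oplus>k \<in> {..n}. [(n choose Suc k)] \<cdot> ?t (Suc n) (Suc k)) \<oplus> y [^] Suc n"
    using x y by (subst finsum_Suc2) (simp_all add: Pi_def)
  also have "(\<Oplus>k \<in> {..n}. [(n choose k)] \<cdot> ?t (Suc n) (Suc k))
      \<oplus> ((\<Oplus>k \<in> {..n}. [(n choose Suc k)] \<cdot> ?t (Suc n) (Suc k)) \<oplus> y [^] Suc n)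
      = (\<Oplus>k \<in> {..n}. [(Suc n choose Suc k)] \<cdot> ?t (Suc n) (Suc k)) \<oplus> y [^] Suc n"
    using x y by (simp add: a_assoc[symmetric] finsum_addf[symmetric] add.nat_pow_mult Pi_def)
  also have "\<dots> = (\<Oplus>k \<in> {..Suc n}. [(Suc n choose k)] \<cdot> ?t (Suc n) k)"
    using x y by (subst finsum_Suc2) (simp_all add: Pi_def)
  finally show ?case .
qed

lemma add_pow_eq_zero_if_char_dvd:
  assumes char: "[(p::nat)] \<cdot> \<one> = \<zero>" and "p dvd m" and z: "z \<in> carrier R"
  shows "[m] \<cdot> z = \<zero>"
proof -
  obtain q where m: "m = p * q" using \<open>p dvd m\<close> by blast
  have "[m] \<cdot> \<one> = [q] \<cdot> ([p] \<cdot> \<one>)"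
    unfolding m using add.nat_pow_pow[of \<one> q p] by simp
  then have "[m] \<cdot> \<one> = \<zero>" using char by simp
  then show ?thesis using add_pow_ldistr[of \<one> z m] z by simp
qed

lemma freshman_dream:
  assumes p: "Factorial_Ring.prime (p::nat)" and char: "[p] \<cdot> \<one> = \<zero>"
    and x: "x \<in> carrier R" and y: "y \<in> carrier R"
  shows "(x \<oplus> y) [^] p = x [^] p \<oplus> y [^] p"
proof -
  obtain q where q: "p = Suc q" using p by (cases p) auto
  let ?t = "\<lambda>k. [(p choose k)] \<cdot> (x [^] k \<otimes> y [^] (p - k))"
  have middle: "?t k = \<zero>" if "0 < k" "k < p" for k
    using add_pow_eq_zero_if_char_dvd[OF char dvd_choose_prime] that p x y by simp
  have "(\<Oplus>k \<in> {..q}. ?t k) = (\<Oplus>k \<in> {..q}. if 0 = k then ?t k else \<zero>)"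
    using middle q x y by (intro finsum_cong') auto
  also have "\<dots> = y [^] p"
    using x y by (subst add.finprod_singleton) auto
  finally have "(\<Oplus>k \<in> {..q}. ?t k) = y [^] p" .
  then show ?thesis
    using binomial_expansion[OF x y, of p] x y unfolding q by (simp add: Pi_def a_comm)
qed

end

section \<open>Subfields, polynomials and degrees\<close>

lemma (in ring_hom_ring) hom_add_pow:
  "x \<in> carrier R \<Longrightarrow> h ([(n::nat)] \<cdot>\<^bsub>R\<^esub> x) = [n] \<cdot>\<^bsub>S\<^esub> h x"
  by (induction n) auto

lemma (in ring) subring_nat_pow_closed:
  assumes "subring K R" "x \<in> K"
  shows "x [^] (n::nat) \<in> K"
  using assms by (induction n) (auto simp: subringE(3,6) subringE(1)[THEN subsetD])

context field begin

lemma generate_field_le_subfield: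
  "subfield E R \<Longrightarrow> U \<subseteq> E \<Longrightarrow> generate_field R U \<subseteq> E"
  using generate_field_min_subfield1 subfieldE(3) by (metis order_trans)

lemma generate_field_Un_absorb:
  assumes "subfield A R" "B \<subseteq> A"
  shows "generate_field R (A \<union> B) = A"
proof
  show "generate_field R (A \<union> B) \<subseteq> A"
    using generate_field_le_subfield[OF assms(1), of "A \<union> B"] assms(2) by simp
  show "A \<subseteq> generate_field R (A \<union> B)"
    by (auto intro: generate_field.incl)
qed

lemma generate_field_Un_generate_field:
  assumes U: "U \<subseteq> carrier R" and V: "V \<subseteq> carrier R"
  shows "generate_field R (generate_field R U \<union> V) = generate_field R (U \<union> V)"
proof
  have "generate_field R U \<union> V \<subseteq> generate_field R (U \<union> V)"
    using mono_generate_field[of U "U \<union> V"] U V by (auto intro: generate_field.incl)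
  then show "generate_field R (generate_field R U \<union> V) \<subseteq> generate_field R (U \<union> V)"
    using generate_field_le_subfield[OF generate_field_is_subfield] U V by simp
  show "generate_field R (U \<union> V) \<subseteq> generate_field R (generate_field R U \<union> V)"
    using mono_generate_field[of "U \<union> V" "generate_field R U \<union> V"] generate_field_incl[OF U] V
    by (auto intro: generate_field.incl)
qed

lemma subfield_ring_hom_vimage:
  assumes h: "h \<in> ring_hom R R" and L: "subfield L R"
  shows "subfield {x \<in> carrier R. h x \<in> L} R"
proof (rule subfieldI')
  interpret h: ring_hom_cring R R h
    using h by (simp add: ring_hom_cring_def ring_hom_cring_axioms_def is_cring)
  note L_closed = subringE(3,5-7)[OF subfieldE(1)[OF L]]
  show "subring {x \<in> carrier R. h x \<in> L} R"
    by (rule subringI) (simp_all add: L_closed)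
  fix k assume "k \<in> {x \<in> carrier R. h x \<in> L} - {\<zero>}"
  then have k: "k \<in> carrier R" "k \<noteq> \<zero>" "h k \<in> L" by auto
  then have k_inv: "inv k \<in> carrier R" "k \<otimes> inv k = \<one>"
    by (simp_all add: field_Units)
  then have "h k \<otimes> h (inv k) = \<one>"
    using h.hom_mult[of k "inv k"] k(1) by simp
  moreover have "h k \<in> carrier R" "h (inv k) \<in> carrier R"
    using k(1) k_inv(1) by simp_all
  ultimately have "h (inv k) = inv (h k)" "h k \<noteq> \<zero>"
    using comm_inv_char[of "h k" "h (inv k)"] by auto
  then show "inv k \<in> {x \<in> carrier R. h x \<in> L}"
    using subfield_m_inv(1)[OF L, of "h k"] k k_inv(1) by simp
qed

lemma linear_power_poly:
  assumes c: "c \<in> carrier R"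
  shows "[\<one>, \<ominus> c] [^]\<^bsub>poly_ring R\<^esub> (n::nat) \<in> carrier (poly_ring R)"
    and "[\<one>, \<ominus> c] [^]\<^bsub>poly_ring R\<^esub> n \<noteq> []"
    and "degree ([\<one>, \<ominus> c] [^]\<^bsub>poly_ring R\<^esub> n) = n"
    and "lead_coeff ([\<one>, \<ominus> c] [^]\<^bsub>poly_ring R\<^esub> n) = \<one>"
    and "roots ([\<one>, \<ominus> c] [^]\<^bsub>poly_ring R\<^esub> n) = replicate_mset n c"
    and "x \<in> carrier R \<Longrightarrow> eval ([\<one>, \<ominus> c] [^]\<^bsub>poly_ring R\<^esub> n) x = (x \<ominus> c) [^] n"
proof -
  interpret P: domain "poly_ring R" using univ_poly_is_domain[OF carrier_is_subring] .
  let ?Q = "[\<one>, \<ominus> c]"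
  have Q: "?Q \<in> carrier (poly_ring R)"
    using c by (simp add: univ_poly_carrier[symmetric] polynomial_def)
  show "?Q [^]\<^bsub>poly_ring R\<^esub> n \<in> carrier (poly_ring R)" using Q by simp
  show "?Q [^]\<^bsub>poly_ring R\<^esub> n \<noteq> []" using polynomial_pow_not_zero[OF Q] by simp
  show "degree (?Q [^]\<^bsub>poly_ring R\<^esub> n) = n" using polynomial_pow_degree[OF Q] by simp
  show "lead_coeff (?Q [^]\<^bsub>poly_ring R\<^esub> n) = \<one>"
  proof (induction n)
    case (Suc n)
    have "?Q [^]\<^bsub>poly_ring R\<^esub> Suc n = poly_mult (?Q [^]\<^bsub>poly_ring R\<^esub> n) ?Q"
      by (simp add: univ_poly_mult)
    then show ?case
      using poly_mult_lead_coeff[OF carrier_is_subring, of "?Q [^]\<^bsub>poly_ring R\<^esub> n" ?Q]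
        polynomial_pow_not_zero[OF Q, of n] Q P.nat_pow_closed[OF Q, of n] Suc
      by (simp add: univ_poly_carrier)
  qed (simp add: univ_poly_one)
  show "roots (?Q [^]\<^bsub>poly_ring R\<^esub> n) = replicate_mset n c"
  proof (induction n)
    case 0
    then show ?case using degree_zero_imp_empty_roots[of "[\<one>]"]
      by (simp add: univ_poly_one univ_poly_carrier[symmetric] polynomial_def)
  next
    case (Suc n)
    have "?Q [^]\<^bsub>poly_ring R\<^esub> Suc n = ?Q \<otimes>\<^bsub>poly_ring R\<^esub> (?Q [^]\<^bsub>poly_ring R\<^esub> n)"
      using Q P.nat_pow_Suc2 by simp
    then show ?case
      using poly_mult_degree_one_monic_imp_same_roots[OF c P.nat_pow_closed[OF Q, of n]
          polynomial_pow_not_zero[OF Q, of n]] Suc by simp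
  qed
  assume x: "x \<in> carrier R"
  interpret eval: ring_hom_cring "poly_ring R" R "\<lambda>q. eval q x"
    using eval_cring_hom[OF carrier_is_subring x] .
  show "eval (?Q [^]\<^bsub>poly_ring R\<^esub> n) x = (x \<ominus> c) [^] n"
    using eval.hom_pow[OF Q] c x by (simp add: a_minus_def)
qed

lemma monic_pdivides_linear_power:
  assumes c: "c \<in> carrier R"
    and q: "q \<in> carrier (poly_ring R)" "q \<noteq> []" "lead_coeff q = \<one>"
    and dvd: "q pdivides [\<one>, \<ominus> c] [^]\<^bsub>poly_ring R\<^esub> (n::nat)"
  shows "q = [\<one>, \<ominus> c] [^]\<^bsub>poly_ring R\<^esub> degree q"
proof -
  interpret P: domain "poly_ring R" using univ_poly_is_domain[OF carrier_is_subring] .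
  let ?L = "\<lambda>m::nat. [\<one>, \<ominus> c] [^]\<^bsub>poly_ring R\<^esub> m"
  note L = linear_power_poly[OF c]
  have "splitted q"
    using pdivides_imp_splitted[OF q(1) L(1,2) _ dvd] L(3,5) by (simp add: splitted_def)
  moreover obtain m where "roots q = replicate_mset m c"
    using pdivides_imp_roots_incl[OF q(1) L(1,2) dvd] L(5) msubseteq_replicate_msetE by metis
  ultimately have "alg_mult q c = degree q"
    using alg_mult_eq_count_roots[OF q(1)] by (simp add: splitted_def)
  then obtain g where g: "g \<in> carrier (poly_ring R)" and q_eq: "q = ?L (degree q) \<otimes>\<^bsub>poly_ring R\<^esub> g"
    using le_alg_mult_imp_pdivides[OF c q(1)] unfolding pdivides_def factor_def by auto
  have g_ne: "g \<noteq> []"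
  proof
    assume "g = []"
    then have "q = \<zero>\<^bsub>poly_ring R\<^esub>"
      using q_eq P.r_null[OF L(1)] by (simp add: univ_poly_zero)
    then show False using q(2) by (simp add: univ_poly_zero)
  qed
  have "degree q = degree (?L (degree q)) + degree g"
    "lead_coeff q = lead_coeff (?L (degree q)) \<otimes> lead_coeff g"
    using q_eq poly_mult_degree_eq[OF carrier_is_subring, of "?L (degree q)" g]
      poly_mult_lead_coeff[OF carrier_is_subring, of "?L (degree q)" g] L(1,2) g g_ne
    by (simp_all add: univ_poly_mult univ_poly_carrier)
  moreover have "lead_coeff g \<in> carrier R"
    using g g_ne polynomial_incl[of "carrier R" g] by (cases g) (auto simp: univ_poly_carrier[symmetric])
  ultimately have "g = [\<one>]"
    using L(3,4) q(3) g_ne by (cases g) auto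
  then show ?thesis using q_eq P.r_one[OF L(1)] by (simp add: univ_poly_one)
qed

lemma mem_subfield_of_coprime_powers:
  fixes a b :: nat
  assumes E: "subfield E R" and c: "c \<in> carrier R"
    and "c [^] a \<in> E" "c [^] b \<in> E" "coprime a b" "a \<noteq> 0"
  shows "c \<in> E"
proof (cases "c = \<zero>")
  case True
  then show ?thesis using subringE(2)[OF subfieldE(1)[OF E]] by simp
next
  case False
  obtain x y where xy: "a * x = b * y + 1"
    using bezout_nat[OF \<open>a \<noteq> 0\<close>, of b] \<open>coprime a b\<close> by (auto simp: coprime_iff_gcd_eq_1)
  have pow_ax: "c [^] (a * x) \<in> E"
    using subring_nat_pow_closed[OF subfieldE(1)[OF E] assms(3), of x] c by (simp add: nat_pow_pow)
  have pow_by: "c [^] (b * y) \<in> E"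
    using subring_nat_pow_closed[OF subfieldE(1)[OF E] assms(4), of y] c by (simp add: nat_pow_pow)
  have pow_by_ne: "c [^] (b * y) \<noteq> \<zero>"
    using Units_pow_closed[of c "b * y"] False c by (simp add: field_Units)
  have "c = inv (c [^] (b * y)) \<otimes> c [^] (a * x)"
    using xy c pow_by_ne by (simp add: nat_pow_mult[symmetric] m_assoc[symmetric] field_Units)
  also have "\<dots> \<in> E"
    using subfield_m_inv(1)[OF E, of "c [^] (b * y)"] pow_by pow_ax pow_by_ne
      subringE(6)[OF subfieldE(1)[OF E]] by blast
  finally show ?thesis .
qed

lemma subalgebra_of_subring:
  assumes "subfield B R" "subring L R" "B \<subseteq> L"
  shows "subalgebra B L R"
proof (rule subalgebra.intro)
  show "subgroup L (add_monoid R)" using subring.axioms(1)[OF assms(2)] .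
  show "subalgebra_axioms B L R"
    using subringE(6)[OF assms(2)] assms(3) by (auto simp: subalgebra_axioms_def)
qed

lemma finite_dimension_over_intermediate:
  assumes B: "subfield B R" and F: "subfield F R" and L: "subring L R"
    and "B \<subseteq> F" "F \<subseteq> L" and "finite_dimension B L"
  shows "finite_dimension F L"
proof -
  obtain n where "dimension n B L" using \<open>finite_dimension B L\<close> by auto
  then obtain Us where Us: "set Us \<subseteq> carrier R" "Span B Us = L"
    using exists_base[OF B] by blast
  have "set Us \<subseteq> L" using Span_base_incl[OF B Us(1)] Us(2) by simp
  then have "Span F Us \<subseteq> L"
    using subalgebra_Span_incl[OF F subalgebra_of_subring[OF F L \<open>F \<subseteq> L\<close>]] by simp
  moreover have "L \<subseteq> Span F Us"
    using Us \<open>B \<subseteq> F\<close> unfolding Span_eq_combine_set[OF B Us(1)] Span_eq_combine_set[OF F Us(1)]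
    by blast
  ultimately show ?thesis using Span_finite_dimension[OF F Us(1)] by simp
qed

lemma dimension_pos:
  assumes "subfield F R" "dimension k F M" "\<one> \<in> M"
  shows "k > 0"
proof (rule ccontr)
  assume "\<not> k > 0"
  then have "M = {\<zero>}" using dimension_zero[OF assms(1)] assms(2) by simp
  then show False using assms(3) by simp
qed

lemma dimension_one_imp_eq:
  assumes F: "subfield F R" and "F \<subseteq> E" and "dimension 1 F E"
  shows "E = F"
proof -
  have one: "\<one> \<in> F" using subringE(3)[OF subfieldE(1)[OF F]] .
  have "independent F [\<one>]" by (rule independent.li_Cons) auto
  moreover have "set [\<one>] \<subseteq> E" using one \<open>F \<subseteq> E\<close> by auto
  ultimately have "E = line_extension F \<one> {\<zero>}"
    using independent_length_eq_dimension[OF F \<open>dimension 1 F E\<close>] by fastforce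
  then show ?thesis
    using line_extension_mem_iff[of _ F \<one> "{\<zero>}"] subfieldE(3)[OF F] by (force simp: subset_iff)
qed

end

section \<open>Fields of characteristic \<open>p\<close>\<close>

locale char_p_field = field R for R (structure) +
  fixes p :: nat
  assumes prime_p: "Factorial_Ring.prime p"
    and char_p: "[p] \<cdot> \<one> = \<zero>"
begin

definition frob :: "'a \<Rightarrow> 'a" where "frob x = x [^] p"

lemma frob_ring_hom: "frob \<in> ring_hom R R"
  by (rule ring_hom_memI)
    (auto simp: frob_def freshman_dream[OF prime_p char_p] pow_mult_distrib m_comm)

lemma ring_hom_ring_frob: "ring_hom_ring R R frob"
  using frob_ring_hom by (simp add: ring_hom_ringI2 ring_axioms)

lemma ring_hom_cring_frob: "ring_hom_cring R R frob"
  using frob_ring_hom by (simp add: ring_hom_cring_def ring_hom_cring_axioms_def is_cring)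

lemma subfield_frob_image: "subfield K R \<Longrightarrow> subfield (frob ` K) R"
  using ring_hom_ring.img_is_subfield(2)[OF ring_hom_ring_frob] by simp

lemma inj_on_frob: "inj_on frob (carrier R)"
  using ring_hom_ring.img_is_subfield(1)[OF ring_hom_ring_frob carrier_is_subfield] by simp

lemma frob_mem_subfield: "subfield K R \<Longrightarrow> x \<in> K \<Longrightarrow> frob x \<in> K"
  unfolding frob_def using subring_nat_pow_closed subfieldE(1) by blast

lemma dimension_frob_image:
  assumes "subfield K R" "E \<subseteq> carrier R" "dimension n K E"
  shows "dimension n (frob ` K) (frob ` E)"
  using ring_hom_ring.inj_hom_dimension[OF ring_hom_ring_frob] inj_on_subset[OF inj_on_frob] assms
  by auto

lemma frob_image_0: "frob_image R p 0 = carrier R"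
  unfolding frob_image_def by auto

lemma frob_image_Suc: "frob_image R p (Suc m) = frob ` frob_image R p m"
  unfolding frob_image_def frob_def image_image by (auto simp: nat_pow_pow mult.commute)

lemma subfield_frob_image_power: "subfield (frob_image R p m) R"
  by (induction m) (simp_all add: frob_image_0 frob_image_Suc carrier_is_subfield subfield_frob_image)

lemma frob_image_carrier: "frob_image R p m \<subseteq> carrier R"
  using subfieldE(3)[OF subfield_frob_image_power] .

lemma frob_image_Suc_subset: "frob_image R p (Suc m) \<subseteq> frob_image R p m"
  unfolding frob_image_Suc using frob_mem_subfield[OF subfield_frob_image_power] by blast

lemma poly_ring_char_p: "[p] \<cdot>\<^bsub>poly_ring R\<^esub> \<one>\<^bsub>poly_ring R\<^esub> = \<zero>\<^bsub>poly_ring R\<^esub>"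
proof -
  interpret const: ring_hom_ring R "poly_ring R" poly_of_const
    using canonical_embedding_ring_hom[OF carrier_is_subring] by simp
  show ?thesis using const.hom_add_pow[of \<one> p] char_p by simp
qed

lemma linear_power_p_in_subfield_poly:
  assumes E: "subfield E R" and c: "c \<in> carrier R" and frob_c: "frob c \<in> E"
  shows "[\<one>, \<ominus> c] [^]\<^bsub>poly_ring R\<^esub> p \<in> carrier (E[X])"
proof -
  interpret P: cring "poly_ring R" using univ_poly_is_cring[OF carrier_is_subring] .
  interpret const: ring_hom_ring R "poly_ring R" poly_of_const
    using canonical_embedding_ring_hom[OF carrier_is_subring] by simp
  interpret frob: ring_hom_cring R R frob by (rule ring_hom_cring_frob)
  have Esub: "subring E R" using subfieldE(1)[OF E] .
  have X: "X \<in> carrier (poly_ring R)" using var_closed(1)[OF carrier_is_subring] .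
  have "[\<one>, \<ominus> c] = X \<oplus>\<^bsub>poly_ring R\<^esub> poly_of_const (\<ominus> c)"
    using c by (cases "c = \<zero>") (auto simp: var_def poly_of_const_def univ_poly_add)
  then have "[\<one>, \<ominus> c] [^]\<^bsub>poly_ring R\<^esub> p
      = X [^]\<^bsub>poly_ring R\<^esub> p \<oplus>\<^bsub>poly_ring R\<^esub> poly_of_const (frob (\<ominus> c))"
    using P.freshman_dream[OF prime_p poly_ring_char_p X] const.hom_nat_pow c
    by (simp add: frob_def)
  moreover have "X [^]\<^bsub>poly_ring R\<^esub> p \<in> carrier (E[X])"
    using var_pow_closed[OF Esub, of p] by (simp add: univ_poly_def nat_pow_def)
  moreover have "frob (\<ominus> c) \<in> E"
    using frob.hom_a_inv[OF c] subringE(5)[OF Esub frob_c] by simp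
  then have "poly_of_const (frob (\<ominus> c)) \<in> carrier (E[X])"
    by (intro ring_hom_memE(1)[OF canonical_embedding_is_hom[OF Esub]]) simp
  ultimately show ?thesis
    using ring.ring_simprules(1)[OF univ_poly_is_ring[OF Esub]] by (simp add: univ_poly_add)
qed

lemma frob_mem_imp_algebraic:
  assumes E: "subfield E R" and c: "c \<in> carrier R" "frob c \<in> E"
  shows "(algebraic over E) c" and "Irr E c pdivides [\<one>, \<ominus> c] [^]\<^bsub>poly_ring R\<^esub> p"
proof -
  let ?P = "[\<one>, \<ominus> c] [^]\<^bsub>poly_ring R\<^esub> p"
  have P: "?P \<in> carrier (E[X])" using linear_power_p_in_subfield_poly[OF E c] .
  have P_root: "eval ?P c = \<zero>"
    using linear_power_poly(6)[OF c(1) c(1), of p] prime_gt_0_nat[OF prime_p] c(1)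
    by (simp add: a_minus_def r_neg nat_pow_zero)
  show alg: "(algebraic over E) c" using algebraicI[OF P linear_power_poly(2)[OF c(1)] P_root] .
  show "Irr E c pdivides ?P" using Irr_minimal[OF E c(1) alg P P_root] .
qed

lemma dimension_simple_extension_frob_mem:
  assumes E: "subfield E R" and c: "c \<in> carrier R" "c \<notin> E" "frob c \<in> E"
  shows "dimension p E (simple_extension E c)"
proof -
  interpret frob: ring_hom_cring R R frob by (rule ring_hom_cring_frob)
  have Esub: "subring E R" using subfieldE(1)[OF E] .
  let ?P = "[\<one>, \<ominus> c] [^]\<^bsub>poly_ring R\<^esub> p"
  note L = linear_power_poly[OF c(1)]
  have P: "?P \<in> carrier (E[X])" using linear_power_p_in_subfield_poly[OF E c(1,3)] .
  note alg = frob_mem_imp_algebraic(1)[OF E c(1,3)]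
    and Irr_dvd = frob_mem_imp_algebraic(2)[OF E c(1,3)]
  note Irr = IrrE[OF E c(1) alg]
  define d where "d = degree (Irr E c)"
  have Irr_ne: "Irr E c \<noteq> []" using pirreducibleE(1)[OF Esub Irr(1,2)] .
  have Irr_poly: "Irr E c \<in> carrier (poly_ring R)"
    using Irr(1) carrier_polynomial[OF Esub] by (simp add: univ_poly_carrier[symmetric])
  have Irr_eq: "Irr E c = [\<one>, \<ominus> c] [^]\<^bsub>poly_ring R\<^esub> d"
    unfolding d_def using monic_pdivides_linear_power[OF c(1) Irr_poly Irr_ne Irr(3) Irr_dvd] .
  have "d \<le> p" "1 \<le> d"
    using pdivides_imp_degree_le[OF Esub Irr(1) P L(2) Irr_dvd] L(3) pirreducible_degree[OF E Irr(1,2)]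
    unfolding d_def by simp_all
  have "eval (Irr E c) \<zero> \<in> E"
    using ring.eval_in_carrier[OF subring_is_ring[OF Esub], of "Irr E c" \<zero>] Irr(1)
      subringE(2)[OF Esub] polynomial_incl eval_consistent[OF Esub] by (simp add: univ_poly_carrier[symmetric])
  then have pow_d: "(\<ominus> c) [^] d \<in> E"
    using L(6)[of \<zero> d] c(1) unfolding Irr_eq by (simp add: a_minus_def)
  have pow_p: "(\<ominus> c) [^] p \<in> E"
    using frob.hom_a_inv[OF c(1)] subringE(5)[OF Esub c(3)] by (simp add: frob_def)
  have "d = p"
  proof (rule ccontr)
    assume "d \<noteq> p"
    then have "\<not> p dvd d"
      using \<open>d \<le> p\<close> \<open>1 \<le> d\<close> by (auto dest: dvd_imp_le)
    then have "coprime d p"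
      using prime_imp_coprime[OF prime_p] by (simp add: coprime_commute)
    then have "\<ominus> c \<in> E"
      using mem_subfield_of_coprime_powers[OF E _ pow_d pow_p] c(1) \<open>1 \<le> d\<close> by simp
    then show False using c subringE(5)[OF Esub, of "\<ominus> c"] by simp
  qed
  then show ?thesis using dimension_simple_extension[OF E c(1) alg] unfolding d_def by simp
qed

lemma simple_extension_frob_mem:
  assumes E: "subfield E R" and c: "c \<in> carrier R" "c \<notin> E" "frob c \<in> E"
  shows "subfield (simple_extension E c) R" "E \<subseteq> simple_extension E c"
    "c \<in> simple_extension E c" "dimension p E (simple_extension E c)"
proof -
  show dim: "dimension p E (simple_extension E c)"
    using dimension_simple_extension_frob_mem[OF assms] .
  then show "subfield (simple_extension E c) R"
    using simple_extension_is_subfield[OF E c(1)] finite_dimension_simple_extension[OF E c(1)]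
      finite_dimensionI by blast
  show "E \<subseteq> simple_extension E c" using simple_extension_incl[OF subfieldE(3)[OF E] c(1)] .
  show "c \<in> simple_extension E c" using simple_extension_mem[OF subfieldE(1)[OF E] c(1)] .
qed

subsection \<open>Complements\<close>

lemma complement_step:
  assumes B: "subfield B R" and F: "subfield F R" and L: "subfield L R"
    and "F \<subseteq> L" and frob_L: "frob ` L \<subseteq> B"
    and M: "subfield M R" "B \<subseteq> M" "M \<subseteq> L"
    and c: "c \<in> L" "c \<notin> generate_field R (M \<union> F)"
  shows "subfield (simple_extension M c) R" "B \<subseteq> simple_extension M c"
    "simple_extension M c \<subseteq> L" "dimension p M (simple_extension M c)"
    "dimension p (generate_field R (M \<union> F)) (generate_field R (simple_extension M c \<union> F))"
proof -
  let ?G = "generate_field R (M \<union> F)"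
  let ?M' = "simple_extension M c"
  have carr: "M \<subseteq> carrier R" "F \<subseteq> carrier R" "c \<in> carrier R"
    using subfieldE(3) M(1) F L c(1) by auto
  have G: "subfield ?G R" using generate_field_is_subfield carr by simp
  have G_M: "M \<subseteq> ?G" and G_F: "F \<subseteq> ?G" by (auto intro: generate_field.incl)
  have frob_c: "frob c \<in> M" "frob c \<in> ?G" using frob_L c(1) M(2) G_M by auto
  have "c \<notin> M" using c(2) G_M by blast
  note M' = simple_extension_frob_mem[OF M(1) carr(3) this frob_c(1)]
  note G' = simple_extension_frob_mem[OF G carr(3) c(2) frob_c(2)]
  show "subfield ?M' R" "dimension p M ?M'" using M'(1,4) by auto
  show "B \<subseteq> ?M'" using M(2) M'(2) by blast
  show "?M' \<subseteq> L"
    using simple_extension_subring_incl[OF subfieldE(1)[OF L] M(3) c(1)] .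
  have "generate_field R (?M' \<union> F) = simple_extension ?G c"
  proof
    have "?M' \<subseteq> simple_extension ?G c"
      using simple_extension_subring_incl[OF subfieldE(1)[OF G'(1)]] G_M G'(2,3) by blast
    then show "generate_field R (?M' \<union> F) \<subseteq> simple_extension ?G c"
      using generate_field_le_subfield[OF G'(1)] G_F G'(2) by blast
    have G_sub: "subfield (generate_field R (?M' \<union> F)) R"
      using generate_field_is_subfield subfieldE(3)[OF M'(1)] carr(2) by simp
    have "?G \<subseteq> generate_field R (?M' \<union> F)"
      using mono_generate_field[of "M \<union> F" "?M' \<union> F"] M'(2) subfieldE(3)[OF M'(1)] carr(2) by blast
    moreover have "c \<in> generate_field R (?M' \<union> F)"
      using M'(3) by (auto intro: generate_field.incl)
    ultimately show "simple_extension ?G c \<subseteq> generate_field R (?M' \<union> F)"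
      using simple_extension_subring_incl[OF subfieldE(1)[OF G_sub]] by blast
  qed
  then show "dimension p ?G (generate_field R (?M' \<union> F))" using G'(4) by simp
qed

text \<open>Induction on \<open>[L : M F]\<close>, starting from \<open>M = B\<close>; each step adjoins some
  \<open>c \<in> L - M F\<close> to \<open>M\<close>, which multiplies both \<open>[M : B]\<close> and \<open>[M F : F]\<close> by \<open>p\<close>.\<close>

lemma exists_complement_subfield:
  assumes B: "subfield B R" and F: "subfield F R" and L: "subfield L R"
    and "B \<subseteq> F" "F \<subseteq> L" and frob_L: "frob ` L \<subseteq> B" and fin: "finite_dimension B L"
  obtains M k where "subfield M R" "B \<subseteq> M" "M \<subseteq> L" "L \<subseteq> generate_field R (M \<union> F)"
    "dimension k B M" "dimension k F L"
proof -
  have F_carr: "F \<subseteq> carrier R" using subfieldE(3)[OF F] .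
  have extend: "\<exists>M k. subfield M R \<and> B \<subseteq> M \<and> M \<subseteq> L \<and> L \<subseteq> generate_field R (M \<union> F) \<and>
      dimension k B M \<and> dimension k F L"
    if "dimension t (generate_field R (M0 \<union> F)) L" "subfield M0 R" "B \<subseteq> M0" "M0 \<subseteq> L"
      "dimension k0 B M0" "dimension k0 F (generate_field R (M0 \<union> F))" for t M0 k0
    using that
  proof (induction t arbitrary: M0 k0 rule: less_induct)
    case (less t)
    let ?G = "generate_field R (M0 \<union> F)"
    have G: "subfield ?G R"
      using generate_field_is_subfield subfieldE(3)[OF less.prems(2)] F_carr by simp
    have G_L: "?G \<subseteq> L"
      using generate_field_le_subfield[OF L] less.prems(4) \<open>F \<subseteq> L\<close> by simp
    show ?case
    proof (cases "?G = L")
      case True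
      then show ?thesis
        using less.prems(2-6) by (intro exI[of _ M0] exI[of _ k0]) auto
    next
      case False
      then obtain c where c: "c \<in> L" "c \<notin> ?G" using G_L by blast
      note step = complement_step[OF B F L \<open>F \<subseteq> L\<close> frob_L less.prems(2-4) c]
      let ?G' = "generate_field R (simple_extension M0 c \<union> F)"
      have G': "subfield ?G' R"
        using generate_field_is_subfield subfieldE(3)[OF step(1)] F_carr by simp
      have "B \<subseteq> ?G'" "?G' \<subseteq> L"
        using step(2,3) generate_field_le_subfield[OF L] \<open>F \<subseteq> L\<close> by (auto intro: generate_field.incl)
      then obtain t' where t': "dimension t' ?G' L"
        using finite_dimension_over_intermediate[OF B G' subfieldE(1)[OF L] _ _ fin] by auto
      have "dimension (p * t') ?G L" using telescopic_base[OF G G' step(5) t'] .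
      then have "t = p * t'" using dimension_is_inj[OF G less.prems(1)] by simp
      moreover have "t' > 0"
        using dimension_pos[OF G' t'] subringE(3)[OF subfieldE(1)[OF L]] by simp
      ultimately have "t' < t" using prime_gt_1_nat[OF prime_p] by simp
      then show ?thesis
        using less.IH[OF _ t' step(1-3) telescopic_base[OF B less.prems(2,5) step(4)]
            telescopic_base[OF F G less.prems(6) step(5)]]
        by blast
    qed
  qed
  have "generate_field R (B \<union> F) = F"
    using generate_field_Un_absorb[OF F \<open>B \<subseteq> F\<close>] by (simp add: Un_commute)
  moreover obtain t where "dimension t F L"
    using finite_dimension_over_intermediate[OF B F subfieldE(1)[OF L] \<open>B \<subseteq> F\<close> \<open>F \<subseteq> L\<close> fin] by auto
  moreover have "B \<subseteq> L" using \<open>B \<subseteq> F\<close> \<open>F \<subseteq> L\<close> by blast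
  ultimately show ?thesis
    using extend[of t B 1] that B dimension_one[OF B] dimension_one[OF F] by auto
qed

subsection \<open>Extending foliations\<close>

lemma frob_image_generate_field_subset:
  assumes "subfield H R" "U \<subseteq> carrier R" "frob ` U \<subseteq> H"
  shows "frob ` generate_field R U \<subseteq> H"
proof -
  have "generate_field R U \<subseteq> {x \<in> carrier R. frob x \<in> H}"
    using generate_field_le_subfield[OF subfield_ring_hom_vimage[OF frob_ring_hom assms(1)]] assms(2,3)
    by blast
  then show ?thesis by blast
qed

lemma finite_dimension_over_frob_image:
  assumes K_fin: "finite_dimension (frob ` carrier R) (carrier R)"
    and L: "subfield L R" "finite_dimension L (carrier R)"
  shows "finite_dimension (frob ` L) L"
proof -
  obtain d where "dimension d L (carrier R)" using L(2) by auto
  then have "dimension d (frob ` L) (frob ` carrier R)"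
    using dimension_frob_image[OF L(1)] by simp
  moreover obtain D where "dimension D (frob ` carrier R) (carrier R)" using K_fin by auto
  ultimately have "finite_dimension (frob ` L) (carrier R)"
    using telescopic_base[OF subfield_frob_image[OF L(1)] subfield_frob_image[OF carrier_is_subfield]]
      finite_dimensionI by blast
  then show ?thesis
    using subalbegra_incl_imp_finite_dimension[OF subfield_frob_image[OF L(1)] _
        subalgebra_of_subring[OF subfield_frob_image[OF L(1)] subfieldE(1)[OF L(1)]]]
      frob_mem_subfield[OF L(1)] subfieldE(3)[OF L(1)] by blast
qed

text \<open>\<open>tower_level r m L\<close>: \<open>L\<close> can be \<open>W\<^sub>m\<^sub>+\<^sub>1\<close> of a foliation of rank \<open>r\<close>, with
  \<open>W\<^sub>m = L K\<^bsup>p^m\<^esup>\<close>; finiteness of \<open>[K : L]\<close> is carried along to keep all degrees finite.\<close>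

definition tower_level :: "nat \<Rightarrow> nat \<Rightarrow> 'a set \<Rightarrow> bool" where
  "tower_level r m L \<longleftrightarrow> subfield L R \<and> frob_image R p (Suc m) \<subseteq> L \<and>
     finite_dimension L (carrier R) \<and> dimension (p ^ r) L (generate_field R (L \<union> frob_image R p m))"

lemma tower_level_extend:
  assumes K_fin: "finite_dimension (frob ` carrier R) (carrier R)"
    and level: "tower_level r m L"
  obtains M where "tower_level r (Suc m) M" "generate_field R (M \<union> frob_image R p (Suc m)) = L"
proof -
  let ?K1 = "frob_image R p (Suc m)"
  let ?G = "generate_field R (L \<union> frob_image R p m)"
  have L: "subfield L R" and K1_L: "?K1 \<subseteq> L" and L_fin: "finite_dimension L (carrier R)"
    and dim_G: "dimension (p ^ r) L ?G"
    using level unfolding tower_level_def by auto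
  have L_carr: "L \<subseteq> carrier R" using subfieldE(3)[OF L] .
  have G: "subfield ?G R"
    using generate_field_is_subfield L_carr frob_image_carrier by simp
  have L_G: "L \<subseteq> ?G" by (auto intro: generate_field.incl)
  have frob_G: "frob ` ?G \<subseteq> H" if "subfield H R" "frob ` L \<subseteq> H" "?K1 \<subseteq> H" for H
    using frob_image_generate_field_subset[OF that(1)] L_carr frob_image_carrier[of m] that(2,3)
    by (simp add: frob_image_Suc image_Un)
  have B: "subfield (frob ` L) R" and F: "subfield (frob ` ?G) R"
    using subfield_frob_image L G by auto
  have frob_L: "frob ` L \<subseteq> L" using frob_mem_subfield[OF L] by blast
  obtain M k where M: "subfield M R" "frob ` L \<subseteq> M" "M \<subseteq> L" "L \<subseteq> generate_field R (M \<union> frob ` ?G)"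
    and dim_M: "dimension k (frob ` L) M" "dimension k (frob ` ?G) L"
    using exists_complement_subfield[OF B F L _ frob_G[OF L frob_L K1_L] _
        finite_dimension_over_frob_image[OF K_fin L L_fin]] L_G frob_L by blast
  obtain t where t: "dimension t M L"
    using finite_dimension_over_intermediate[OF B M(1) subfieldE(1)[OF L] M(2,3)
        finite_dimension_over_frob_image[OF K_fin L L_fin]] by auto
  have "dimension (p ^ r * k) (frob ` L) L"
    using telescopic_base[OF B F dimension_frob_image[OF L _ dim_G] dim_M(2)] subfieldE(3)[OF G] .
  moreover have "dimension (k * t) (frob ` L) L" using telescopic_base[OF B M(1) dim_M(1) t] .
  moreover have "k > 0" using dimension_pos[OF B dim_M(1)] subringE(3)[OF subfieldE(1)[OF M(1)]] .
  ultimately have "t = p ^ r" using dimension_is_inj[OF B] by (metis mult.commute mult_left_cancel not_gr0)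
  have gen: "generate_field R (M \<union> ?K1) = L"
  proof
    show "generate_field R (M \<union> ?K1) \<subseteq> L"
      using generate_field_le_subfield[OF L] M(3) K1_L by simp
    let ?H = "generate_field R (M \<union> ?K1)"
    have H: "subfield ?H R"
      using generate_field_is_subfield subfieldE(3)[OF M(1)] frob_image_carrier by simp
    have "M \<union> ?K1 \<subseteq> ?H" by (auto intro: generate_field.incl)
    then have "M \<union> frob ` ?G \<subseteq> ?H" using frob_G[OF H] M(2) by blast
    then show "L \<subseteq> ?H" using M(4) generate_field_le_subfield[OF H] by blast
  qed
  have "frob_image R p (Suc (Suc m)) \<subseteq> M"
    using frob_image_Suc[of "Suc m"] K1_L M(2) by blast
  moreover have "finite_dimension M (carrier R)"
    using telescopic_base_dim(1)[OF M(1) L finite_dimensionI[OF t] L_fin] .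
  ultimately have "tower_level r (Suc m) M"
    unfolding tower_level_def using M(1) t \<open>t = p ^ r\<close> gen by simp
  then show thesis using that gen by blast
qed

lemma finite_dimension_carrier_over_frob_image:
  assumes "\<exists>S. finite S \<and> S \<subseteq> carrier R \<and> generate_field R (perfect_core R p \<union> S) = carrier R"
  shows "finite_dimension (frob ` carrier R) (carrier R)"
proof -
  let ?Kp = "frob ` carrier R"
  obtain xs where xs: "set xs \<subseteq> carrier R" "generate_field R (perfect_core R p \<union> set xs) = carrier R"
    using assms finite_list by metis
  have Kp: "subfield ?Kp R" using subfield_frob_image[OF carrier_is_subfield] .
  have alg: "(algebraic over ?Kp) x" if "x \<in> set xs" for x
    using frob_mem_imp_algebraic(1)[OF Kp] xs(1) that by blast
  let ?E = "finite_extension ?Kp xs"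
  have E: "subfield ?E R" using finite_extension_is_subfield[OF Kp xs(1) alg] .
  have "perfect_core R p \<subseteq> ?Kp"
    unfolding perfect_core_def using frob_image_Suc[of 0] frob_image_0 by blast
  then have "perfect_core R p \<union> set xs \<subseteq> ?E"
    using finite_extension_incl[OF subfieldE(3)[OF Kp] xs(1)]
      finite_extension_mem[OF subfieldE(1)[OF Kp] xs(1)] by blast
  then have "?E = carrier R"
    using generate_field_le_subfield[OF E] xs(2) subfieldE(3)[OF E] by blast
  then show ?thesis
    using finite_extension_finite_dimension(1)[OF Kp xs(1) alg] by simp
qed

lemma power_tower_of_steps:
  assumes sub: "\<And>i. subfield (T i) R"
    and step: "\<And>i. T i = generate_field R (T (Suc i) \<union> frob_image R p i)"
  shows "power_tower R p T"
proof -
  have T_carr: "T i \<subseteq> carrier R" for i using subfieldE(3)[OF sub] .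
  have "T j = generate_field R (T (j + d) \<union> frob_image R p j)" for d j
  proof (induction d arbitrary: j)
    case 0
    have "frob_image R p j \<subseteq> T j"
      using step[of j] by (auto intro: generate_field.incl)
    then show ?case using generate_field_Un_absorb[OF sub] by simp
  next
    case (Suc d)
    have "T j = generate_field R (generate_field R (T (Suc j + d) \<union> frob_image R p (Suc j))
        \<union> frob_image R p j)"
      using step[of j] Suc[of "Suc j"] by simp
    also have "\<dots> = generate_field R (T (Suc j + d) \<union> frob_image R p (Suc j) \<union> frob_image R p j)"
      using generate_field_Un_generate_field T_carr frob_image_carrier by simp
    also have "T (Suc j + d) \<union> frob_image R p (Suc j) \<union> frob_image R p j
        = T (j + Suc d) \<union> frob_image R p j"
      using frob_image_Suc_subset[of j] by auto
    finally show ?case .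
  qed
  then show ?thesis
    unfolding power_tower_def composite_def using sub by (metis le_add_diff_inverse)
qed

lemma tower_level_continuation:
  assumes K_fin: "finite_dimension (frob ` carrier R) (carrier R)"
    and level: "tower_level r m L"
  obtains T where "T 0 = L" "\<And>i. subfield (T i) R"
    "\<And>i. T i = generate_field R (T (Suc i) \<union> frob_image R p (Suc m + i))"
    "\<And>i. dimension (p ^ r) (T (Suc i)) (T i)"
proof -
  have "\<exists>T. \<forall>i. (tower_level r (m + i) (T i) \<and> (i = 0 \<longrightarrow> T i = L)) \<and>
      generate_field R (T (Suc i) \<union> frob_image R p (Suc (m + i))) = T i"
  proof (rule dependent_nat_choice)
    show "\<exists>M. tower_level r (m + 0) M \<and> (0 = 0 \<longrightarrow> M = L)" using level by auto
  next
    fix M i assume "tower_level r (m + i) M \<and> (i = 0 \<longrightarrow> M = L)"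
    then obtain M' where "tower_level r (Suc (m + i)) M'"
      "generate_field R (M' \<union> frob_image R p (Suc (m + i))) = M"
      using tower_level_extend[OF K_fin] by blast
    then show "\<exists>M'. (tower_level r (m + Suc i) M' \<and> (Suc i = 0 \<longrightarrow> M' = L)) \<and>
        generate_field R (M' \<union> frob_image R p (Suc (m + i))) = M"
      by auto
  qed
  then obtain T where T: "\<And>i. tower_level r (m + i) (T i) \<and> (i = 0 \<longrightarrow> T i = L) \<and>
      generate_field R (T (Suc i) \<union> frob_image R p (Suc (m + i))) = T i"
    by blast
  show thesis
  proof (rule that)
    show "T 0 = L" using T[of 0] by simp
    show "subfield (T i) R" for i using T[of i] unfolding tower_level_def by simp
    show "T i = generate_field R (T (Suc i) \<union> frob_image R p (Suc m + i))" for i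
      using T[of i] by simp
    show "dimension (p ^ r) (T (Suc i)) (T i)" for i
      using T[of i] T[of "Suc i"] unfolding tower_level_def by simp
  qed
qed

lemma power_tower_step:
  "power_tower R p W \<Longrightarrow> W i = generate_field R (W (Suc i) \<union> frob_image R p i)"
  unfolding power_tower_def composite_def by simp

lemma power_tower_0:
  assumes "power_tower R p W"
  shows "W 0 = carrier R"
proof -
  have "carrier R \<subseteq> W 0"
    using power_tower_step[OF assms, of 0] frob_image_0 by (auto intro: generate_field.incl)
  then show ?thesis
    using subfieldE(3) assms unfolding power_tower_def by blast
qed

lemma n_foliation_rank_pos:
  assumes fol: "n_foliation R p (Suc m) r W"
  shows "r \<ge> 1"
proof (rule ccontr)
  assume "\<not> r \<ge> 1"
  then have "r = 0" by simp
  then have tower: "power_tower R p W" and "dimension 1 (W (Suc m)) (W m)"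
    using fol unfolding n_foliation_def ext_degree_def by auto
  moreover have "W (Suc m) \<subseteq> W m"
    using power_tower_step[OF tower, of m] by (auto intro: generate_field.incl)
  ultimately have eq: "W m = W (Suc m)"
    using dimension_one_imp_eq power_tower_def by blast
  have len: "tower_length W (Suc m)" using fol unfolding n_foliation_def by simp
  then have stable: "\<And>N. N \<ge> Suc m \<Longrightarrow> W N = W (Suc m)" unfolding tower_length_def by blast
  have "\<forall>m' < Suc m. \<not> (\<forall>N \<ge> m'. W N = W m')"
    using len unfolding tower_length_def by (rule conjunct2)
  then have minimal: "\<not> (\<forall>N \<ge> m. W N = W m)" by simp
  have "W N = W m" if "N \<ge> m" for N
    using that stable[of N] eq by (cases "N = m") auto
  then show False using minimal by blast
qed

lemma n_foliation_tower_level: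
  assumes fol: "n_foliation R p (Suc m) r W"
  shows "tower_level r m (W (Suc m))"
proof -
  have tower: "power_tower R p W" and dim: "\<And>i. i < Suc m \<Longrightarrow> dimension (p ^ r) (W (Suc i)) (W i)"
    using fol unfolding n_foliation_def ext_degree_def by auto
  have sub: "subfield (W i) R" for i using tower unfolding power_tower_def by blast
  have "finite_dimension (W i) (carrier R)" if "i \<le> Suc m" for i
    using that
  proof (induction i)
    case 0
    then show ?case using power_tower_0[OF tower] finite_dimensionI[OF dimension_one] carrier_is_subfield
      by metis
  next
    case (Suc i)
    then show ?case
      using telescopic_base_dim(1)[OF sub sub finite_dimensionI[OF dim]] by simp
  qed
  moreover have "frob_image R p (Suc m) \<subseteq> W (Suc m)"
    using power_tower_step[OF tower, of "Suc m"] by (auto intro: generate_field.incl)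
  ultimately show ?thesis
    unfolding tower_level_def using sub dim[of m] power_tower_step[OF tower, of m] by simp
qed

lemma inf_foliation_concat:
  assumes "r \<ge> 1" and tower: "power_tower R p W"
    and dim: "\<And>i. i < n \<Longrightarrow> dimension (p ^ r) (W (Suc i)) (W i)"
    and T: "T 0 = W n" "\<And>i. subfield (T i) R"
      "\<And>i. T i = generate_field R (T (Suc i) \<union> frob_image R p (n + i))"
      "\<And>i. dimension (p ^ r) (T (Suc i)) (T i)"
  shows "inf_foliation R p r (\<lambda>i. if i \<le> n then W i else T (i - n))"
    (is "inf_foliation R p r ?W'")
proof -
  have step: "?W' i = generate_field R (?W' (Suc i) \<union> frob_image R p i) \<and>
      dimension (p ^ r) (?W' (Suc i)) (?W' i)" for i
  proof (cases "i < n")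
    case True
    then show ?thesis using power_tower_step[OF tower, of i] dim[of i] by simp
  next
    case False
    then obtain j where i: "i = n + j" using le_Suc_ex by (metis not_less)
    then have "?W' i = T j" "?W' (Suc i) = T (Suc j)" using T(1) by auto
    then show ?thesis using T(3,4)[of j] i by simp
  qed
  have "subfield (W i) R" for i using tower unfolding power_tower_def by blast
  then have "subfield (?W' i) R" for i using T(2) by simp
  then have "power_tower R p ?W'"
    by (rule power_tower_of_steps) (use step in blast)
  then show ?thesis
    unfolding inf_foliation_def ext_degree_def using \<open>r \<ge> 1\<close> step by blast
qed

end

theorem mainTheorem14:
  fixes R :: "('a, 'b) ring_scheme" and p n r :: nat and W :: "nat \<Rightarrow> 'a set"
  assumes "field R"
    and "Factorial_Ring.prime p"
    and "[p] \<cdot>\<^bsub>R\<^esub> \<one>\<^bsub>R\<^esub> = \<zero>\<^bsub>R\<^esub>"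
    and "\<exists>S. finite S \<and> S \<subseteq> carrier R \<and>
           generate_field R (perfect_core R p \<union> S) = carrier R"
    and "n \<ge> 1"
    and "n_foliation R p n r W"
  shows "\<exists>W'. inf_foliation R p r W' \<and> (\<forall>i\<le>n. W' i = W i)"
proof -
  interpret char_p_field R p
    using assms(1-3) by (simp add: char_p_field_def char_p_field_axioms_def)
  obtain m where n: "n = Suc m" using assms(5) by (cases n) auto
  have tower: "power_tower R p W" and dim: "\<And>i. i < n \<Longrightarrow> dimension (p ^ r) (W (Suc i)) (W i)"
    using assms(6) unfolding n_foliation_def ext_degree_def by auto
  obtain T where "T 0 = W n" "\<And>i. subfield (T i) R"
    "\<And>i. T i = generate_field R (T (Suc i) \<union> frob_image R p (n + i))"
    "\<And>i. dimension (p ^ r) (T (Suc i)) (T i)"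
    using tower_level_continuation[OF finite_dimension_carrier_over_frob_image[OF assms(4)]
        n_foliation_tower_level[OF assms(6)[unfolded n]]] unfolding n by blast
  then have "inf_foliation R p r (\<lambda>i. if i \<le> n then W i else T (i - n))"
    using inf_foliation_concat[OF n_foliation_rank_pos[OF assms(6)[unfolded n]] tower dim] by blast
  then show ?thesis by (intro exI[of _ "\<lambda>i. if i \<le> n then W i else T (i - n)"]) auto
qed

end
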